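(* Let $\ell\in V$ be a nonzero $1$-form, let $i,j\in[n]$ be distinct, and let $L$ be a subspace of $\bigwedge^{k}V$ such that $\ell\wedge y=0$ for all $y\in N_{j\to i}L$. Then $\ell\wedge(e_{i}-e_{j})\wedge x=0$ for all $x\in L$. Moreover, if $L$ is nontrivial (no nonzero $v\in V$ satisfies $v\wedge x=0$ for all $x\in L$), then $\ell\wedge(e_{i}-e_{j})\neq0$.
   Context: $\mathbb{F}$ is a field (assumed throughout the paper, for expository purposes, to have characteristic not $2$), $V$ is an $n$-dimensional $\mathbb{F}$-vector space with a fixed basis $e_1,\dots,e_n$, and $\bigwedge V$ its exterior algebra. For $j\in[n]$, $V^{(j)}$ is the span of $\{e_h:h\neq j\}$. Slow shift: for distinct $i,j\in[n]$ and nonzero $m\in\bigwedge^kV$, write uniquely $m=x+e_j\wedge y$ with $x\in\bigwedge^kV^{(j)}$, $y\in\bigwedge^{k-1}V^{(j)}$, and set $N_{j\to i}m=x+e_i\wedge y$ if this is nonzero, and $N_{j\to i}m=e_j\wedge y$ otherwise (the limit as $t\to0$ of the projective action of the linear map $e_j\mapsto e_i+te_j$ fixing the other $e_h$). For a subspace $L$ of $\bigwedge^kV$, $N_{j\to i}L$ is the span of $\{N_{j\to i}m:m\in L\setminus\{0\}\}$. *)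

theory Defs
  imports Main
begin

text \<open>Exterior algebra of an n-dimensional space V over a field with basis e_1..e_n
(indices in {1..n}).  An element of the exterior algebra is represented by its
coefficient function on the standard basis e_S = e_{s1} wedge ... wedge e_{sr}
(s1 < ... < sr), i.e. a function from finite subsets S of {1..n} to the field.\<close>

type_synonym 'a ext = "nat set \<Rightarrow> 'a"

definition ext_zero :: "'a::field ext" where
  "ext_zero = (\<lambda>S. 0)"

definition ext_add :: "'a::field ext \<Rightarrow> 'a ext \<Rightarrow> 'a ext" where
  "ext_add a b = (\<lambda>S. a S + b S)"

definition ext_diff :: "'a::field ext \<Rightarrow> 'a ext \<Rightarrow> 'a ext" where
  "ext_diff a b = (\<lambda>S. a S - b S)"

definition ext_smult :: "'a::field \<Rightarrow> 'a ext \<Rightarrow> 'a ext" where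
  "ext_smult c a = (\<lambda>S. c * a S)"

definition in_ext :: "nat \<Rightarrow> 'a::field ext \<Rightarrow> bool" where
  "in_ext n a \<longleftrightarrow> (\<forall>S. a S \<noteq> 0 \<longrightarrow> S \<subseteq> {1..n})"

definition in_ext_k :: "nat \<Rightarrow> nat \<Rightarrow> 'a::field ext \<Rightarrow> bool" where
  "in_ext_k n k a \<longleftrightarrow> in_ext n a \<and> (\<forall>S. a S \<noteq> 0 \<longrightarrow> card S = k)"

definition ebasis :: "nat \<Rightarrow> 'a::field ext" where
  "ebasis i = (\<lambda>S. if S = {i} then 1 else 0)"

text \<open>Sign of e_T wedge e_U = sign * e_(T union U) for disjoint T, U.\<close>
definition wsign :: "nat set \<Rightarrow> nat set \<Rightarrow> 'a::field" where
  "wsign T U = (- 1) ^ card {(t, u). t \<in> T \<and> u \<in> U \<and> u < t}"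

definition wedge :: "'a::field ext \<Rightarrow> 'a ext \<Rightarrow> 'a ext" where
  "wedge a b = (\<lambda>S. \<Sum>T\<in>Pow S. wsign T (S - T) * a T * b (S - T))"

definition ext_subspace :: "nat \<Rightarrow> nat \<Rightarrow> 'a::field ext set \<Rightarrow> bool" where
  "ext_subspace n k L \<longleftrightarrow> ext_zero \<in> L \<and> (\<forall>a\<in>L. in_ext_k n k a)
     \<and> (\<forall>a\<in>L. \<forall>b\<in>L. ext_add a b \<in> L) \<and> (\<forall>c. \<forall>a\<in>L. ext_smult c a \<in> L)"

definition ext_span :: "'a::field ext set \<Rightarrow> 'a ext set" where
  "ext_span X = {v. \<exists>A c. finite A \<and> A \<subseteq> X \<and> v = (\<lambda>S. \<Sum>u\<in>A. c u * u S)}"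

text \<open>Decomposition m = x + e_j wedge y with x, y not involving e_j.\<close>
definition dec_x :: "nat \<Rightarrow> 'a::field ext \<Rightarrow> 'a ext" where
  "dec_x j m = (\<lambda>S. if j \<in> S then 0 else m S)"

definition dec_y :: "nat \<Rightarrow> 'a::field ext \<Rightarrow> 'a ext" where
  "dec_y j m = (\<lambda>T. if j \<in> T then 0 else wsign {j} T * m (insert j T))"

definition slow_shift :: "nat \<Rightarrow> nat \<Rightarrow> 'a::field ext \<Rightarrow> 'a ext" where
  "slow_shift j i m =
    (let z = ext_add (dec_x j m) (wedge (ebasis i) (dec_y j m))
     in if z \<noteq> ext_zero then z else wedge (ebasis j) (dec_y j m))"

definition slow_shift_space :: "nat \<Rightarrow> nat \<Rightarrow> 'a::field ext set \<Rightarrow> 'a ext set" where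
  "slow_shift_space j i L = ext_span {slow_shift j i m | m. m \<in> L \<and> m \<noteq> ext_zero}"

definition ext_nontrivial :: "nat \<Rightarrow> 'a::field ext set \<Rightarrow> bool" where
  "ext_nontrivial n L \<longleftrightarrow>
     \<not> (\<exists>v. in_ext_k n 1 v \<and> v \<noteq> ext_zero \<and> (\<forall>x\<in>L. wedge v x = ext_zero))"

end

(* Put w = e_i - e_j and write m in L as m = x + e_j ^ y with x, y free of e_j. Then
   m = z - w ^ y for z = x + e_i ^ y, and w ^ w = 0 (characteristic not 2) gives w ^ m = w ^ z.
   If z <> 0 then z = N_{j->i} m, so l ^ z = 0 and l ^ w ^ m = - w ^ l ^ z = 0.
   If moreover l ^ w = 0, then l is a nonzero multiple of w, so w annihilates N_{j->i} L.
   As z is free of e_j, the e_j-part of w ^ z is - e_j ^ z, which forces z = 0; hence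
   m = - w ^ y and N_{j->i} m = e_j ^ y. Now w ^ e_j ^ y = 0 and w ^ w ^ y = 0 give
   w ^ e_i ^ y = 0, i.e. e_i ^ m = 0 for every m in L, contradicting nontriviality. *)

theory Submission
  imports Defs
begin

subsection \<open>Signs\<close>

lemma wsign_nonzero: "wsign T U \<noteq> (0::'a::field)"
  unfolding wsign_def by simp

lemma wsign_mult_self: "wsign T U * wsign T U = (1::'a::field)"
  unfolding wsign_def by (simp add: power_mult_distrib[symmetric])

lemma wsign_empty_right: "wsign T {} = 1"
  unfolding wsign_def by simp

lemma wsign_singleton: "wsign {s} A = (-1) ^ card {a\<in>A. a < s}"
proof -
  have "{(t, u). t \<in> {s} \<and> u \<in> A \<and> u < t} = Pair s ` {a\<in>A. a < s}" by auto
  then show ?thesis unfolding wsign_def by (simp add: card_image inj_on_def)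
qed

lemma wsign_Un_left:
  assumes "finite U" "finite V" "finite W" "U \<inter> V = {}"
  shows "wsign (U \<union> V) W = (wsign U W * wsign V W :: 'a::field)"
proof -
  have "{(t, u). t \<in> U \<union> V \<and> u \<in> W \<and> u < t}
      = {(t, u). t \<in> U \<and> u \<in> W \<and> u < t} \<union> {(t, u). t \<in> V \<and> u \<in> W \<and> u < t}"
    by auto
  moreover have "finite {(t, u). t \<in> X \<and> u \<in> W \<and> u < t}" if "finite X" for X
    by (rule finite_subset[of _ "X \<times> W"]) (use that assms in auto)
  ultimately show ?thesis
    unfolding wsign_def using assms by (simp add: card_Un_disjoint disjoint_iff power_add)
qed

lemma wsign_Un_right:
  assumes "finite U" "finite V" "finite W" "V \<inter> W = {}"
  shows "wsign U (V \<union> W) = (wsign U V * wsign U W :: 'a::field)"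
proof -
  have "{(t, u). t \<in> U \<and> u \<in> V \<union> W \<and> u < t}
      = {(t, u). t \<in> U \<and> u \<in> V \<and> u < t} \<union> {(t, u). t \<in> U \<and> u \<in> W \<and> u < t}"
    by auto
  moreover have "finite {(t, u). t \<in> U \<and> u \<in> X \<and> u < t}" if "finite X" for X
    by (rule finite_subset[of _ "U \<times> X"]) (use that assms in auto)
  ultimately show ?thesis
    unfolding wsign_def using assms by (simp add: card_Un_disjoint disjoint_iff power_add)
qed

lemma wsign_cocycle:
  assumes "finite S" "U \<subseteq> T" "T \<subseteq> S"
  shows "wsign T (S - T) * wsign U (T - U) = (wsign U (S - U) * wsign (T - U) (S - T) :: 'a::field)"
proof -
  have fin: "finite T" "finite U" "finite (S - T)" "finite (T - U)"
    using assms by (auto intro: finite_subset)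
  have split: "T = U \<union> (T - U)" "S - U = (T - U) \<union> (S - T)"
    using assms by auto
  have "wsign T (S - T) = (wsign U (S - T) * wsign (T - U) (S - T) :: 'a)"
    by (subst split(1)) (rule wsign_Un_left, use fin in auto)
  moreover have "wsign U (S - U) = (wsign U (T - U) * wsign U (S - T) :: 'a)"
    by (subst split(2)) (rule wsign_Un_right, use fin in auto)
  ultimately show ?thesis by (simp add: mult_ac)
qed

text \<open>Antisymmetry of the sign of e_S = e_s ^ e_t ^ e_(S - {s, t}) in s and t.\<close>
lemma wsign_pair_swap:
  assumes "finite S" "s \<in> S" "t \<in> S" "s \<noteq> t"
  shows "wsign {s} (S - {s}) * wsign {t} (S - {s} - {t}) =
    - (wsign {t} (S - {t}) * wsign {s} (S - {t} - {s}) :: 'a::field)"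
proof -
  have less: "wsign {s} (S - {s}) * wsign {t} (S - {s} - {t}) =
      - (wsign {t} (S - {t}) * wsign {s} (S - {t} - {s}) :: 'a)"
    if "s \<in> S" "t \<in> S" "s < t" for s t
  proof -
    have "{a \<in> S - {s}. a < s} = {a \<in> S - {t} - {s}. a < s}"
      and t_part: "{a \<in> S - {t}. a < t} = insert s {a \<in> S - {s} - {t}. a < t}"
      using that by auto
    moreover have "card {a \<in> S - {t}. a < t} = Suc (card {a \<in> S - {s} - {t}. a < t})"
      unfolding t_part using assms(1) by (simp add: card_insert_disjoint)
    ultimately show ?thesis unfolding wsign_singleton by simp
  qed
  show ?thesis
    using assms less[of s t] less[of t s] by (cases "s < t") (auto simp: neq_iff)
qed

subsection \<open>Linearity and associativity of the wedge product\<close>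

lemma wedge_infinite: "infinite S \<Longrightarrow> wedge a b S = 0"
  by (simp add: wedge_def finite_Pow_iff)

lemma wedge_zero_right: "wedge a ext_zero = ext_zero"
  unfolding wedge_def ext_zero_def by simp

lemma wedge_diff_left: "wedge (ext_diff a b) c = ext_diff (wedge a c) (wedge b c)"
  unfolding wedge_def ext_diff_def by (simp add: sum_subtractf algebra_simps)

lemma wedge_diff_right: "wedge a (ext_diff b c) = ext_diff (wedge a b) (wedge a c)"
  unfolding wedge_def ext_diff_def by (simp add: sum_subtractf algebra_simps)

lemma wedge_smult_left: "wedge (ext_smult k a) c = ext_smult k (wedge a c)"
  unfolding wedge_def ext_smult_def by (simp add: sum_distrib_left algebra_simps)

lemma ext_smult_eq_zero_iff: "ext_smult c a = ext_zero \<longleftrightarrow> c = 0 \<or> a = ext_zero"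
  unfolding ext_smult_def ext_zero_def by (auto simp: fun_eq_iff)

lemma wedge_smult_left_eq_zero_iff:
  "c \<noteq> 0 \<Longrightarrow> wedge (ext_smult c a) b = ext_zero \<longleftrightarrow> wedge a b = ext_zero"
  by (simp add: wedge_smult_left ext_smult_eq_zero_iff)

lemma wedge_assoc: "wedge (wedge a b) c = wedge a (wedge b c)"
proof
  fix S
  show "wedge (wedge a b) c S = wedge a (wedge b c) S"
  proof (cases "finite S")
    case False
    then show ?thesis by (simp add: wedge_infinite)
  next
    case fin: True
    let ?f = "\<lambda>U V. wsign U (S - U) * a U * (wsign V (S - U - V) * b V * c (S - U - V))"
    have "wedge (wedge a b) c S
        = (\<Sum>T\<in>Pow S. \<Sum>U\<in>Pow T. wsign T (S - T) * wsign U (T - U) * a U * b (T - U) * c (S - T))"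
      unfolding wedge_def by (simp add: sum_distrib_left sum_distrib_right mult_ac)
    also have "\<dots> = (\<Sum>(T, U)\<in>Sigma (Pow S) Pow.
        wsign T (S - T) * wsign U (T - U) * a U * b (T - U) * c (S - T))"
      by (rule sum.Sigma) (use fin in \<open>auto intro: finite_subset\<close>)
    also have "\<dots> = (\<Sum>(U, V)\<in>Sigma (Pow S) (\<lambda>U. Pow (S - U)). ?f U V)"
    proof (rule sum.reindex_bij_witness[where i = "\<lambda>(U, V). (U \<union> V, U)"
          and j = "\<lambda>(T, U). (U, T - U)"])
      fix p assume "p \<in> Sigma (Pow S) Pow"
      then obtain T U where p: "p = (T, U)" and UT: "U \<subseteq> T" "T \<subseteq> S" by auto
      moreover have "S - U - (T - U) = S - T" using UT by auto
      ultimately show "(\<lambda>(U, V). ?f U V) ((\<lambda>(T, U). (U, T - U)) p)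
          = (\<lambda>(T, U). wsign T (S - T) * wsign U (T - U) * a U * b (T - U) * c (S - T)) p"
        using wsign_cocycle[OF fin UT, where 'a = 'a] by (simp add: mult_ac)
      show "(\<lambda>(U, V). (U \<union> V, U)) ((\<lambda>(T, U). (U, T - U)) p) = p"
        and "(\<lambda>(T, U). (U, T - U)) p \<in> Sigma (Pow S) (\<lambda>U. Pow (S - U))"
        using p UT by auto
    qed auto
    also have "\<dots> = (\<Sum>U\<in>Pow S. \<Sum>V\<in>Pow (S - U). ?f U V)"
      by (rule sum.Sigma[symmetric]) (use fin in auto)
    also have "\<dots> = wedge a (wedge b c) S"
      unfolding wedge_def by (simp add: sum_distrib_left)
    finally show ?thesis .
  qed
qed

subsection \<open>Wedging with one-forms\<close>

definition one_form :: "'a::field ext \<Rightarrow> bool" where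
  "one_form u \<longleftrightarrow> (\<forall>T. u T \<noteq> 0 \<longrightarrow> (\<exists>s. T = {s}))"

lemma ebasis_neq_zero: "ebasis p \<noteq> ext_zero"
  unfolding ebasis_def ext_zero_def by (metis one_neq_zero)

lemma in_ext_k_ebasis: "p \<in> {1..n} \<Longrightarrow> in_ext_k n 1 (ebasis p)"
  unfolding in_ext_k_def in_ext_def ebasis_def by simp

lemma one_form_ebasis: "one_form (ebasis p)"
  unfolding one_form_def ebasis_def by auto

lemma one_form_diff: "one_form u \<Longrightarrow> one_form v \<Longrightarrow> one_form (ext_diff u v)"
  unfolding one_form_def ext_diff_def by (metis diff_self)

lemma in_ext_k_one_imp_one_form: "in_ext_k n 1 u \<Longrightarrow> one_form u"
  unfolding one_form_def in_ext_k_def by (auto simp: card_1_singleton_iff)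

lemma wedge_one_form_left:
  assumes "one_form u"
  shows "wedge u a S = (\<Sum>s\<in>S. u {s} * wsign {s} (S - {s}) * a (S - {s}))"
proof (cases "finite S")
  case False
  then show ?thesis by (simp add: wedge_infinite)
next
  case True
  have "wedge u a S = (\<Sum>T\<in>(\<lambda>s. {s}) ` S. wsign T (S - T) * u T * a (S - T))"
    unfolding wedge_def
    by (rule sum.mono_neutral_right) (use True assms in \<open>auto simp: one_form_def\<close>)
  also have "\<dots> = (\<Sum>s\<in>S. u {s} * wsign {s} (S - {s}) * a (S - {s}))"
    by (simp add: sum.reindex mult_ac)
  finally show ?thesis .
qed

lemma wedge_ebasis_left:
  "wedge (ebasis p) a S = (if finite S \<and> p \<in> S then wsign {p} (S - {p}) * a (S - {p}) else 0)"
proof (cases "finite S")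
  case False
  then show ?thesis by (simp add: wedge_infinite)
next
  case True
  have "wedge (ebasis p) a S = (\<Sum>s\<in>S. if s = p then wsign {p} (S - {p}) * a (S - {p}) else 0)"
    unfolding wedge_one_form_left[OF one_form_ebasis] by (rule sum.cong) (auto simp: ebasis_def)
  then show ?thesis using True by simp
qed

lemma wedge_one_forms_expand:
  assumes "one_form u" "one_form v" "finite S"
  shows "wedge u (wedge v c) S = (\<Sum>s\<in>S. \<Sum>t\<in>{t. t \<in> S \<and> s \<noteq> t}.
    u {s} * v {t} * (wsign {s} (S - {s}) * wsign {t} (S - {s} - {t})) * c (S - {s} - {t}))"
  unfolding wedge_one_form_left[OF assms(1)] wedge_one_form_left[OF assms(2)] sum_distrib_left
  by (intro sum.cong) (auto simp: mult_ac)

lemma wedge_one_form_anticomm: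
  assumes u: "one_form u" and v: "one_form v"
  shows "wedge u (wedge v c) S = - wedge v (wedge u c) S"
proof (cases "finite S")
  case False
  then show ?thesis by (simp add: wedge_infinite)
next
  case fin: True
  have "wedge u (wedge v c) S = (\<Sum>t\<in>S. \<Sum>s\<in>{s. s \<in> S \<and> s \<noteq> t}.
      u {s} * v {t} * (wsign {s} (S - {s}) * wsign {t} (S - {s} - {t})) * c (S - {s} - {t}))"
    unfolding wedge_one_forms_expand[OF u v fin] by (rule sum.swap_restrict) (use fin in auto)
  also have "\<dots> = (\<Sum>t\<in>S. \<Sum>s\<in>{s. s \<in> S \<and> t \<noteq> s}.
      - (v {t} * u {s} * (wsign {t} (S - {t}) * wsign {s} (S - {t} - {s})) * c (S - {t} - {s})))"
  proof (intro sum.cong refl)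
    fix t s assume "t \<in> S" "s \<in> {s. s \<in> S \<and> t \<noteq> s}"
    then have "S - {s} - {t} = S - {t} - {s}"
      and "wsign {s} (S - {s}) * wsign {t} (S - {s} - {t})
        = - (wsign {t} (S - {t}) * wsign {s} (S - {t} - {s}) :: 'a)"
      using fin by (auto intro: wsign_pair_swap)
    then show "u {s} * v {t} * (wsign {s} (S - {s}) * wsign {t} (S - {s} - {t})) * c (S - {s} - {t})
      = - (v {t} * u {s} * (wsign {t} (S - {t}) * wsign {s} (S - {t} - {s})) * c (S - {t} - {s}))"
      by simp
  qed auto
  also have "\<dots> = - wedge v (wedge u c) S"
    unfolding wedge_one_forms_expand[OF v u fin] by (simp add: sum_negf)
  finally show ?thesis .
qed

lemma wedge_one_form_swap_eq_zero:
  assumes "one_form u" "one_form v" "wedge v (wedge u c) = ext_zero"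
  shows "wedge u (wedge v c) = ext_zero"
  using assms wedge_one_form_anticomm[OF assms(1,2)] by (simp add: ext_zero_def fun_eq_iff)

lemma wedge_one_form_self:
  assumes "(2::'a::field) \<noteq> 0" "one_form u"
  shows "wedge u (wedge u (c::'a ext)) = ext_zero"
proof
  fix S
  have "2 * wedge u (wedge u c) S = 0"
    using wedge_one_form_anticomm[OF assms(2,2), of c S] by simp
  then show "wedge u (wedge u c) S = ext_zero S"
    using assms(1) by (simp add: ext_zero_def)
qed

lemma one_form_eq_smult_diff_ebasis:
  assumes l: "one_form l" and ij: "i \<noteq> j"
    and h: "wedge l (ext_diff (ebasis i) (ebasis j)) = ext_zero"
  shows "l = ext_smult (l {i}) (ext_diff (ebasis i) (ebasis j))"
proof -
  define w :: "'a ext" where "w = ext_diff (ebasis i) (ebasis j)"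
  have w: "w T = (if T = {i} then 1 else if T = {j} then -1 else 0)" for T
    using ij by (auto simp: w_def ext_diff_def ebasis_def)
  have coeff: "(\<Sum>s\<in>S. l {s} * wsign {s} (S - {s}) * w (S - {s})) = 0" for S
    using fun_cong[OF h, of S] unfolding wedge_one_form_left[OF l] w_def by (simp add: ext_zero_def)
  have other: "l {a} = 0" if "a \<noteq> i" "a \<noteq> j" for a
  proof -
    have "{a, i} - {a} = {i}" "{a, i} - {i} = {a}" using that by auto
    then have "l {a} * wsign {a} {i} = 0" using coeff[of "{a, i}"] that by (simp add: w)
    then show ?thesis by (simp add: wsign_nonzero)
  qed
  have "wsign {i} {j} = - (wsign {j} {i} :: 'a)"
    using wsign_pair_swap[of "{i, j}" i j] ij by (simp add: insert_Diff_if wsign_empty_right)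
  moreover have "{i, j} - {i} = {j}" "{i, j} - {j} = {i}" using ij by auto
  ultimately have "wsign {j} {i} * (l {i} + l {j}) = 0"
    using coeff[of "{i, j}"] ij by (simp add: w algebra_simps)
  then have lj: "l {j} = - l {i}" by (simp add: wsign_nonzero add_eq_0_iff)
  show ?thesis
    unfolding w_def[symmetric]
  proof
    fix S
    show "l S = ext_smult (l {i}) w S"
      using l other lj ij unfolding one_form_def ext_smult_def w by (cases "\<exists>s. S = {s}") auto
  qed
qed

lemma in_ext_ebasis: "i \<in> {1..n} \<Longrightarrow> in_ext n (ebasis i)"
  unfolding in_ext_def ebasis_def by simp

lemma in_ext_add: "in_ext n a \<Longrightarrow> in_ext n b \<Longrightarrow> in_ext n (ext_add a b)"
  unfolding in_ext_def ext_add_def by (metis add.right_neutral add_0)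

lemma in_ext_wedge:
  assumes "in_ext n a" "in_ext n b"
  shows "in_ext n (wedge a b)"
  unfolding in_ext_def
proof (intro allI impI)
  fix S assume "wedge a b S \<noteq> 0"
  then obtain T where "T \<subseteq> S" "a T \<noteq> 0" "b (S - T) \<noteq> 0"
    unfolding wedge_def by (metis (no_types, lifting) PowD mult_not_zero sum.neutral)
  then show "S \<subseteq> {1..n}"
    using assms unfolding in_ext_def by blast
qed

lemma in_ext_dec_x: "in_ext n m \<Longrightarrow> in_ext n (dec_x j m)"
  unfolding in_ext_def dec_x_def by simp

lemma in_ext_dec_y:
  assumes "in_ext n m"
  shows "in_ext n (dec_y j m)"
  unfolding in_ext_def
proof (intro allI impI)
  fix S assume "dec_y j m S \<noteq> 0"
  then have "m (insert j S) \<noteq> 0" by (simp add: dec_y_def split: if_splits)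
  then show "S \<subseteq> {1..n}" using assms unfolding in_ext_def by blast
qed

definition avoids :: "nat \<Rightarrow> 'a::field ext \<Rightarrow> bool" where
  "avoids j a \<longleftrightarrow> (\<forall>S. j \<in> S \<longrightarrow> a S = 0)"

lemma avoids_add: "avoids j a \<Longrightarrow> avoids j b \<Longrightarrow> avoids j (ext_add a b)"
  unfolding avoids_def ext_add_def by simp

lemma avoids_wedge_ebasis: "i \<noteq> j \<Longrightarrow> avoids j a \<Longrightarrow> avoids j (wedge (ebasis i) a)"
  unfolding avoids_def by (simp add: wedge_ebasis_left)

lemma avoids_dec_x: "avoids j (dec_x j m)"
  unfolding avoids_def dec_x_def by simp

lemma avoids_dec_y: "avoids j (dec_y j m)"
  unfolding avoids_def dec_y_def by simp

lemma avoiding_eq_zero_if_wedge_diff_ebasis: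
  assumes z: "in_ext n z" "avoids j z" and "i \<noteq> j"
    and h: "wedge (ext_diff (ebasis i) (ebasis j)) z = ext_zero"
  shows "z = ext_zero"
proof
  fix T
  show "z T = ext_zero T"
  proof (cases "j \<notin> T \<and> finite T")
    case False
    then show ?thesis
      using z unfolding in_ext_def avoids_def ext_zero_def
      by (metis finite_atLeastAtMost finite_subset)
  next
    case True
    have "wedge (ebasis i) z (insert j T) - wedge (ebasis j) z (insert j T) = 0"
      using fun_cong[OF h, of "insert j T"]
      unfolding wedge_diff_left by (simp add: ext_diff_def ext_zero_def)
    moreover have "wedge (ebasis i) z (insert j T) = 0"
      using avoids_wedge_ebasis[OF \<open>i \<noteq> j\<close> z(2)] by (simp add: avoids_def)
    moreover have "wedge (ebasis j) z (insert j T) = wsign {j} T * z T"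
      using True by (simp add: wedge_ebasis_left)
    ultimately show ?thesis by (simp add: wsign_nonzero ext_zero_def)
  qed
qed

subsection \<open>The slow shift\<close>

text \<open>The image x + e_i ^ y of m = x + e_j ^ y under the substitution e_j := e_i.\<close>
definition basis_subst :: "nat \<Rightarrow> nat \<Rightarrow> 'a::field ext \<Rightarrow> 'a ext" where
  "basis_subst j i m = ext_add (dec_x j m) (wedge (ebasis i) (dec_y j m))"

lemma slow_shift_eq:
  "slow_shift j i m = (if basis_subst j i m \<noteq> ext_zero then basis_subst j i m
     else wedge (ebasis j) (dec_y j m))"
  by (simp add: slow_shift_def basis_subst_def Let_def)

lemma slow_shift_zero: "slow_shift j i ext_zero = (ext_zero :: 'a::field ext)"
proof -
  have "dec_x j ext_zero = (ext_zero :: 'a ext)" "dec_y j ext_zero = (ext_zero :: 'a ext)"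
    "ext_add ext_zero ext_zero = (ext_zero :: 'a ext)"
    by (simp_all add: dec_x_def dec_y_def ext_add_def ext_zero_def fun_eq_iff)
  then show ?thesis by (simp add: slow_shift_eq basis_subst_def wedge_zero_right)
qed

lemma ext_zero_mem_ext_span: "ext_zero \<in> ext_span X"
  unfolding ext_span_def ext_zero_def by (intro CollectI exI[of _ "{}"]) simp

lemma mem_ext_span: "x \<in> X \<Longrightarrow> x \<in> ext_span X"
  unfolding ext_span_def by (intro CollectI exI[of _ "{x}"] exI[of _ "\<lambda>_. 1"]) simp

lemma slow_shift_mem_slow_shift_space:
  assumes "m \<in> L"
  shows "slow_shift j i m \<in> slow_shift_space j i L"
proof (cases "m = ext_zero")
  case True
  then show ?thesis by (simp add: slow_shift_zero slow_shift_space_def ext_zero_mem_ext_span)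
next
  case False
  then show ?thesis
    unfolding slow_shift_space_def using assms by (intro mem_ext_span) blast
qed

lemma in_ext_basis_subst: "in_ext n m \<Longrightarrow> i \<in> {1..n} \<Longrightarrow> in_ext n (basis_subst j i m)"
  unfolding basis_subst_def
  by (intro in_ext_add in_ext_wedge in_ext_ebasis in_ext_dec_x in_ext_dec_y)

lemma avoids_basis_subst: "i \<noteq> j \<Longrightarrow> avoids j (basis_subst j i m)"
  unfolding basis_subst_def by (intro avoids_add avoids_wedge_ebasis avoids_dec_x avoids_dec_y)

lemma dec_x_add_wedge_dec_y:
  assumes "in_ext n m"
  shows "m = ext_add (dec_x j m) (wedge (ebasis j) (dec_y j m))"
proof
  fix S
  show "m S = ext_add (dec_x j m) (wedge (ebasis j) (dec_y j m)) S"
  proof (cases "finite S \<and> j \<in> S")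
    case True
    then have "insert j (S - {j}) = S" by auto
    then show ?thesis
      using True wsign_mult_self[of "{j}" "S - {j}", where 'a = 'a]
      by (simp add: ext_add_def dec_x_def dec_y_def wedge_ebasis_left mult.assoc[symmetric])
  next
    case False
    have "m S = 0" if "infinite S"
      using assms that unfolding in_ext_def by (metis finite_atLeastAtMost finite_subset)
    then show ?thesis using False by (auto simp: ext_add_def dec_x_def wedge_ebasis_left)
  qed
qed

lemma basis_subst_decomp:
  assumes "in_ext n m"
  shows "m = ext_diff (basis_subst j i m) (wedge (ext_diff (ebasis i) (ebasis j)) (dec_y j m))"
proof
  fix S
  have "m S = dec_x j m S + wedge (ebasis j) (dec_y j m) S"
    using fun_cong[OF dec_x_add_wedge_dec_y[OF assms, of j], of S] by (simp add: ext_add_def)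
  then show "m S = ext_diff (basis_subst j i m)
      (wedge (ext_diff (ebasis i) (ebasis j)) (dec_y j m)) S"
    unfolding basis_subst_def wedge_diff_left by (simp add: ext_add_def ext_diff_def)
qed

lemma wedge_diff_ebasis_eq_basis_subst:
  assumes "(2::'a::field) \<noteq> 0" "in_ext n (m::'a ext)"
  shows "wedge (ext_diff (ebasis i) (ebasis j)) m
    = wedge (ext_diff (ebasis i) (ebasis j)) (basis_subst j i m)"
    (is "wedge ?w m = wedge ?w ?z")
proof -
  have "wedge ?w m = wedge ?w (ext_diff ?z (wedge ?w (dec_y j m)))"
    using basis_subst_decomp[OF assms(2), of j i] by (rule arg_cong)
  also have "\<dots> = ext_diff (wedge ?w ?z) ext_zero"
    unfolding wedge_diff_right
    using wedge_one_form_self[OF assms(1) one_form_diff[OF one_form_ebasis one_form_ebasis]]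
    by simp
  also have "\<dots> = wedge ?w ?z"
    by (simp add: ext_diff_def ext_zero_def)
  finally show ?thesis .
qed

lemma wedge_wedge_diff_ebasis_eq_zero:
  assumes char: "(2::'a::field) \<noteq> 0" and l: "one_form l" and m: "in_ext n (m::'a ext)"
    and h: "wedge l (slow_shift j i m) = ext_zero"
  shows "wedge (wedge l (ext_diff (ebasis i) (ebasis j))) m = ext_zero"
proof -
  let ?w = "ext_diff (ebasis i) (ebasis j)" and ?z = "basis_subst j i m"
  have w: "one_form ?w" by (intro one_form_diff one_form_ebasis)
  have "wedge l (wedge ?w ?z) = ext_zero"
  proof (cases "?z = ext_zero")
    case True
    then show ?thesis by (simp add: wedge_zero_right)
  next
    case False
    then have "wedge l ?z = ext_zero" using h by (simp add: slow_shift_eq)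
    then show ?thesis by (intro wedge_one_form_swap_eq_zero[OF l w]) (simp add: wedge_zero_right)
  qed
  then show ?thesis by (simp add: wedge_assoc wedge_diff_ebasis_eq_basis_subst[OF char m])
qed

lemma wedge_ebasis_eq_zero_if_slow_shift:
  assumes char: "(2::'a::field) \<noteq> 0" and m: "in_ext n (m::'a ext)"
    and i: "i \<in> {1..n}" and ij: "i \<noteq> j"
    and h: "wedge (ext_diff (ebasis i) (ebasis j)) (slow_shift j i m) = ext_zero"
  shows "wedge (ebasis i) m = ext_zero"
proof -
  let ?w = "ext_diff (ebasis i) (ebasis j)" and ?z = "basis_subst j i m" and ?y = "dec_y j m"
  have w: "one_form ?w" by (intro one_form_diff one_form_ebasis)
  have z: "?z = ext_zero"
  proof (rule ccontr)
    assume "?z \<noteq> ext_zero"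
    then have "wedge ?w ?z = ext_zero" using h by (simp add: slow_shift_eq)
    then show False
      using \<open>?z \<noteq> ext_zero\<close> avoiding_eq_zero_if_wedge_diff_ebasis ij
        in_ext_basis_subst[OF m i] avoids_basis_subst[OF ij] by blast
  qed
  have "wedge ?w (wedge (ebasis j) ?y) = ext_zero"
    using h z by (simp add: slow_shift_eq)
  moreover have "wedge ?w (wedge ?w ?y) = ext_zero"
    by (rule wedge_one_form_self[OF char w])
  ultimately have "wedge ?w (wedge (ebasis i) ?y) = ext_zero"
    unfolding wedge_diff_left[of "ebasis i"] wedge_diff_right
    by (simp add: ext_diff_def ext_zero_def fun_eq_iff)
  then have wiwy: "wedge (ebasis i) (wedge ?w ?y) = ext_zero"
    by (rule wedge_one_form_swap_eq_zero[OF one_form_ebasis w])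
  have "wedge (ebasis i) m = wedge (ebasis i) (ext_diff ext_zero (wedge ?w ?y))"
    using basis_subst_decomp[OF m, of j i] unfolding z by (rule arg_cong)
  also have "\<dots> = ext_diff ext_zero ext_zero"
    by (simp only: wedge_diff_right wedge_zero_right wiwy)
  finally show ?thesis by (simp add: ext_diff_def ext_zero_def)
qed

theorem lemma5p4:
  fixes n k i j :: nat and l :: "'a::field ext" and L :: "'a ext set"
  assumes char: "(2::'a) \<noteq> 0"
    and l1: "in_ext_k n 1 l" and l0: "l \<noteq> ext_zero"
    and ij: "i \<in> {1..n}" "j \<in> {1..n}" "i \<noteq> j"
    and L: "ext_subspace n k L"
    and hyp: "\<forall>y\<in>slow_shift_space j i L. wedge l y = ext_zero"
  shows "(\<forall>x\<in>L. wedge (wedge l (ext_diff (ebasis i) (ebasis j))) x = ext_zero)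
    \<and> (ext_nontrivial n L \<longrightarrow> wedge l (ext_diff (ebasis i) (ebasis j)) \<noteq> ext_zero)"
proof -
  let ?w = "ext_diff (ebasis i) (ebasis j)"
  have l: "one_form l" using l1 by (rule in_ext_k_one_imp_one_form)
  have in_ext_L: "in_ext n x" if "x \<in> L" for x
    using L that unfolding ext_subspace_def in_ext_k_def by blast
  have shift: "wedge l (slow_shift j i x) = ext_zero" if "x \<in> L" for x
    using hyp slow_shift_mem_slow_shift_space[OF that] by blast
  have "wedge l ?w \<noteq> ext_zero" if nt: "ext_nontrivial n L"
  proof
    assume "wedge l ?w = ext_zero"
    then have l_eq: "l = ext_smult (l {i}) ?w"
      using one_form_eq_smult_diff_ebasis[OF l ij(3)] by blast
    with l0 have "l {i} \<noteq> 0" by (metis ext_smult_eq_zero_iff)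
    with shift l_eq have "wedge ?w (slow_shift j i x) = ext_zero" if "x \<in> L" for x
      using that by (metis wedge_smult_left_eq_zero_iff)
    then have "wedge (ebasis i) x = ext_zero" if "x \<in> L" for x
      using wedge_ebasis_eq_zero_if_slow_shift[OF char in_ext_L[OF that] ij(1,3)] that by blast
    then show False
      using nt in_ext_k_ebasis[OF ij(1)] ebasis_neq_zero unfolding ext_nontrivial_def by blast
  qed
  then show ?thesis
    using wedge_wedge_diff_ebasis_eq_zero[OF char l in_ext_L shift] by blast
qed

end
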